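(* Let $\tau>0$ and let $\tilde N^E_2,\tilde B_2\in\mathbb{C}^{n_2,n_2}$ be commuting matrices with $\tilde N^E_2$ nilpotent. If $\sigma(\tilde N^E_2,I,\tilde B_2)=\{\lambda\in\mathbb{C}:\det(\lambda\tilde N^E_2-I-e^{-\lambda\tau}\tilde B_2)=0\}\subseteq\mathbb{C}_-=\{\lambda:\mathrm{Re}\,\lambda<0\}$, then every eigenvalue of $\tilde B_2$ has modulus strictly less than $1$. Consequently, there exists a norm on $\mathbb{C}^{n_2}$ whose induced matrix norm satisfies $\|\tilde B_2\|<1$. *)

theory Defs
  imports Complex_Main "Jordan_Normal_Form.Jordan_Normal_Form"
begin

definition is_vec_norm :: "nat \<Rightarrow> (complex vec \<Rightarrow> real) \<Rightarrow> bool" where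
  "is_vec_norm n N \<longleftrightarrow>
     (\<forall>v\<in>carrier_vec n. 0 \<le> N v \<and> (N v = 0 \<longleftrightarrow> v = 0\<^sub>v n)) \<and>
     (\<forall>c. \<forall>v\<in>carrier_vec n. N (c \<cdot>\<^sub>v v) = cmod c * N v) \<and>
     (\<forall>u\<in>carrier_vec n. \<forall>v\<in>carrier_vec n. N (u + v) \<le> N u + N v)"

text \<open>Matrix norm induced by the vector norm N (sup over unit vectors; 0 if n = 0).\<close>
definition induced_mat_norm :: "nat \<Rightarrow> (complex vec \<Rightarrow> real) \<Rightarrow> complex mat \<Rightarrow> real" where
  "induced_mat_norm n N A = Sup (insert 0 {N (A *\<^sub>v v) | v. v \<in> carrier_vec n \<and> N v = 1})"

end

(* If B v = \<mu> v with |\<mu>| \<ge> 1, then since N commutes with B and is nilpotent, some N^j v is a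
   common eigenvector w of B with N w = 0.  Solving e^(-z \<tau>) = -1/\<mu> gives Re z \<ge> 0, and the
   characteristic matrix z N - I - e^(-z \<tau>) B kills w, so z is a root in the closed right half
   plane.  Hence every eigenvalue of B lies in the open unit disc, the powers B^k decay like r^k
   for some r < 1, and for L large the norm v \<mapsto> \<Sum>k<L. \<parallel>B^k v\<parallel>\<^sub>1 is contracted by B. *)

theory Submission
  imports Defs "Jordan_Normal_Form.Spectral_Radius"
begin

lemma pow_mat_commute:
  assumes A: "A \<in> carrier_mat n n" and C: "C \<in> carrier_mat n n" and AC: "A * C = C * A"
  shows "A ^\<^sub>m k * C = C * A ^\<^sub>m k"
proof (induction k)
  case 0
  then show ?case using A C by simp
next
  case (Suc k)
  have "A ^\<^sub>m Suc k * C = A ^\<^sub>m k * (A * C)"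
    using A C by (simp add: assoc_mult_mat[of _ n n _ n _ n])
  also have "\<dots> = (A ^\<^sub>m k * C) * A"
    using A C AC by (simp add: assoc_mult_mat[of _ n n _ n _ n])
  also have "\<dots> = C * A ^\<^sub>m Suc k"
    using A C Suc by (simp add: assoc_mult_mat[of _ n n _ n _ n])
  finally show ?case .
qed

lemma smult_pow_mat:
  assumes A: "(A :: 'a :: comm_ring_1 mat) \<in> carrier_mat n n"
  shows "(c \<cdot>\<^sub>m A) ^\<^sub>m k = c ^ k \<cdot>\<^sub>m A ^\<^sub>m k"
proof (induction k)
  case 0
  then show ?case using A by (auto simp: one_mat_def smult_mat_def)
next
  case (Suc k)
  have Ak: "A ^\<^sub>m k \<in> carrier_mat n n" using A by simp
  have "(c \<cdot>\<^sub>m A) ^\<^sub>m Suc k = c ^ k \<cdot>\<^sub>m (A ^\<^sub>m k * (c \<cdot>\<^sub>m A))"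
    using Suc mult_smult_assoc_mat[OF Ak smult_carrier_mat[OF A]] by simp
  also have "\<dots> = c ^ k \<cdot>\<^sub>m (c \<cdot>\<^sub>m A ^\<^sub>m Suc k)"
    using mult_smult_distrib[OF Ak A] by simp
  also have "\<dots> = c ^ Suc k \<cdot>\<^sub>m A ^\<^sub>m Suc k"
    by (rule eq_matI) (auto simp: mult.assoc)
  finally show ?case .
qed

lemma smult_mat_mult_vec:
  assumes "A \<in> carrier_mat n m" "v \<in> carrier_vec m"
  shows "((c :: 'a :: comm_ring_1) \<cdot>\<^sub>m A) *\<^sub>v v = c \<cdot>\<^sub>v (A *\<^sub>v v)"
  using assms by (intro eq_vecI) (auto simp: scalar_prod_def sum_distrib_left mult.assoc)

lemma eigenvalue_smult_mat:
  assumes A: "(A :: 'a :: comm_ring_1 mat) \<in> carrier_mat n n" and ev: "eigenvalue A \<mu>"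
  shows "eigenvalue (c \<cdot>\<^sub>m A) (c * \<mu>)"
proof -
  from ev obtain v where v: "v \<in> carrier_vec n" "v \<noteq> 0\<^sub>v n" "A *\<^sub>v v = \<mu> \<cdot>\<^sub>v v"
    using A unfolding eigenvalue_def eigenvector_def by auto
  have "(c \<cdot>\<^sub>m A) *\<^sub>v v = (c * \<mu>) \<cdot>\<^sub>v v"
    using v smult_mat_mult_vec[OF A v(1)] by (auto simp: smult_smult_assoc)
  then show ?thesis
    using A v unfolding eigenvalue_def eigenvector_def by auto
qed

text \<open>The eigenspace of \<open>B\<close> is invariant under the commuting nilpotent \<open>N\<close>, so the last
  nonzero vector \<open>N\<^sup>j v\<close> in the orbit of an eigenvector \<open>v\<close> lies in the kernel of \<open>N\<close>.\<close>

lemma commuting_nilpotent_common_eigenvector: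
  fixes N B :: "'a :: comm_ring_1 mat"
  assumes N: "N \<in> carrier_mat n n" and B: "B \<in> carrier_mat n n" and NB: "N * B = B * N"
    and nil: "N ^\<^sub>m k = 0\<^sub>m n n" and ev: "eigenvalue B \<mu>"
  shows "\<exists>w. eigenvector B w \<mu> \<and> N *\<^sub>v w = 0\<^sub>v n"
proof -
  from ev obtain v where v: "v \<in> carrier_vec n" "v \<noteq> 0\<^sub>v n" "B *\<^sub>v v = \<mu> \<cdot>\<^sub>v v"
    using B unfolding eigenvalue_def eigenvector_def by auto
  have Nj: "N ^\<^sub>m j \<in> carrier_mat n n" for j using N by simp
  define m where "m = (LEAST j. N ^\<^sub>m j *\<^sub>v v = 0\<^sub>v n)"
  have m: "N ^\<^sub>m m *\<^sub>v v = 0\<^sub>v n"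
    unfolding m_def by (rule LeastI[of _ k]) (use nil v(1) in auto)
  have "m \<noteq> 0" using m v N by auto
  then obtain j where mj: "m = Suc j" by (cases m) auto
  define w where "w = N ^\<^sub>m j *\<^sub>v v"
  have w: "w \<in> carrier_vec n" unfolding w_def using Nj[of j] v(1) by simp
  have w0: "w \<noteq> 0\<^sub>v n"
    unfolding w_def using not_less_Least[of j "\<lambda>j. N ^\<^sub>m j *\<^sub>v v = 0\<^sub>v n"] mj m_def by simp
  have "N *\<^sub>v w = (N * N ^\<^sub>m j) *\<^sub>v v"
    unfolding w_def using assoc_mult_mat_vec[OF N Nj v(1)] by simp
  also have "\<dots> = N ^\<^sub>m m *\<^sub>v v"
    using pow_mat_commute[OF N N refl, of j] mj by simp
  finally have Nw: "N *\<^sub>v w = 0\<^sub>v n" using m by simp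
  have "B *\<^sub>v w = (B * N ^\<^sub>m j) *\<^sub>v v"
    unfolding w_def using assoc_mult_mat_vec[OF B Nj v(1)] by simp
  also have "\<dots> = N ^\<^sub>m j *\<^sub>v (B *\<^sub>v v)"
    unfolding pow_mat_commute[OF N B NB, of j, symmetric] by (rule assoc_mult_mat_vec[OF Nj B v(1)])
  also have "\<dots> = \<mu> \<cdot>\<^sub>v w"
    unfolding w_def v(3) using Nj[of j] v(1) by (intro eq_vecI) auto
  finally show ?thesis
    using w w0 Nw B unfolding eigenvector_def by auto
qed

lemma exists_exp_neg_mult_eq:
  assumes "\<tau> > 0" and "a \<noteq> 0" and "cmod a \<le> 1"
  shows "\<exists>z. 0 \<le> Re z \<and> exp (- z * complex_of_real \<tau>) = a"
proof (intro exI conjI)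
  define w where "w = Complex (ln (cmod a)) (Arg a)"
  have "exp w = a"
    unfolding w_def using assms(2) by (simp add: exp_eq_polar cis_Arg sgn_div_norm scaleR_conv_of_real)
  then show "exp (- (- w / complex_of_real \<tau>) * complex_of_real \<tau>) = a"
    using assms(1) by simp
  have "ln (cmod a) \<le> 0" using assms(2,3) by simp
  then show "0 \<le> Re (- w / complex_of_real \<tau>)"
    unfolding w_def using assms(1) by (simp add: Re_divide_of_real divide_nonpos_pos)
qed

text \<open>A common eigenvector \<open>w\<close> with \<open>N w = 0\<close> and \<open>B w = \<mu> w\<close>, \<open>\<bar>\<mu>\<bar> \<ge> 1\<close>, is annihilated by
  the characteristic matrix at any \<open>z\<close> with \<open>e\<^sup>-\<^sup>z\<^sup>\<tau> = -1/\<mu>\<close>, and such a \<open>z\<close> lies in the closed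
  right half plane.\<close>

lemma eigenvalue_cmod_less_1:
  fixes \<tau> :: real and N B :: "complex mat"
  assumes \<tau>: "\<tau> > 0" and N: "N \<in> carrier_mat n n" and B: "B \<in> carrier_mat n n"
    and NB: "N * B = B * N" and nil: "N ^\<^sub>m k = 0\<^sub>m n n"
    and stable: "{z. det (z \<cdot>\<^sub>m N - 1\<^sub>m n - exp (- z * complex_of_real \<tau>) \<cdot>\<^sub>m B) = 0}
           \<subseteq> {z. Re z < 0}"
    and ev: "eigenvalue B \<mu>"
  shows "cmod \<mu> < 1"
proof (rule ccontr)
  assume "\<not> cmod \<mu> < 1"
  then have \<mu>: "\<mu> \<noteq> 0" "cmod (- 1 / \<mu>) \<le> 1" by (auto simp: norm_divide divide_le_eq_1)
  obtain w where w: "w \<in> carrier_vec n" "w \<noteq> 0\<^sub>v n" "B *\<^sub>v w = \<mu> \<cdot>\<^sub>v w" "N *\<^sub>v w = 0\<^sub>v n"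
    using commuting_nilpotent_common_eigenvector[OF N B NB nil ev] B unfolding eigenvector_def by auto
  obtain z where z: "0 \<le> Re z" "exp (- z * complex_of_real \<tau>) = - 1 / \<mu>"
    using exists_exp_neg_mult_eq[OF \<tau> _ \<mu>(2)] \<mu>(1) by auto
  define M where "M = z \<cdot>\<^sub>m N - 1\<^sub>m n - exp (- z * complex_of_real \<tau>) \<cdot>\<^sub>m B"
  have M: "M \<in> carrier_mat n n" unfolding M_def using N B by auto
  have "M *\<^sub>v w = (z \<cdot>\<^sub>m N - 1\<^sub>m n) *\<^sub>v w - (- 1 / \<mu> \<cdot>\<^sub>m B) *\<^sub>v w"
    unfolding M_def z(2) using N B w(1) by (subst minus_mult_distrib_mat_vec[of _ n n]) auto
  also have "\<dots> = z \<cdot>\<^sub>v (N *\<^sub>v w) - w - (- 1 / \<mu>) \<cdot>\<^sub>v (B *\<^sub>v w)"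
    using N B w(1) by (subst minus_mult_distrib_mat_vec[of _ n n]) (auto simp: smult_mat_mult_vec)
  also have "\<dots> = 0\<^sub>v n"
    using w \<mu>(1) by (intro eq_vecI) auto
  finally have "det M = 0" using det_0_iff_vec_prod_zero[OF M] w by auto
  then have "Re z < 0" using stable unfolding M_def by auto
  with z(1) show False by simp
qed

lemma eigenvalues_uniformly_less_1:
  fixes B :: "complex mat"
  assumes B: "B \<in> carrier_mat n n" and ev: "\<And>\<mu>. eigenvalue B \<mu> \<Longrightarrow> cmod \<mu> < 1"
  shows "\<exists>r. 0 < r \<and> r < 1 \<and> (\<forall>\<mu>. eigenvalue B \<mu> \<longrightarrow> cmod \<mu> < r)"
proof (cases "n = 0")
  case True
  then show ?thesis
    using eigenvalue_imp_nonzero_dim[OF B] by (intro exI[of _ "1/2"]) auto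
next
  case False
  then have n: "n > 0" by simp
  obtain \<mu> where "\<mu> \<in> spectrum B" "spectral_radius B = cmod \<mu>"
    using spectral_radius_mem_max(1)[OF B n] by auto
  then have \<rho>: "0 \<le> spectral_radius B" "spectral_radius B < 1"
    using ev unfolding spectrum_def by auto
  have "cmod \<mu> \<le> spectral_radius B" if "eigenvalue B \<mu>" for \<mu>
    using spectral_radius_mem_max(2)[OF B n] that unfolding spectrum_def by auto
  then show ?thesis
    using \<rho> by (intro exI[of _ "(1 + spectral_radius B) / 2"]) force
qed

lemma power_bounded_if_eigenvalues_less_1:
  fixes A :: "complex mat"
  assumes A: "A \<in> carrier_mat n n" and ev: "\<And>\<mu>. eigenvalue A \<mu> \<Longrightarrow> cmod \<mu> < 1"
  shows "\<exists>c. \<forall>k. norm_bound (A ^\<^sub>m k) c"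
proof (cases "n = 0")
  case True
  then show ?thesis using A by (auto simp: norm_bound_def)
next
  case False
  then obtain \<mu> where "\<mu> \<in> spectrum A" "spectral_radius A = cmod \<mu>"
    using spectral_radius_mem_max(1)[OF A] by auto
  then have "spectral_radius A < 1" using ev unfolding spectrum_def by auto
  then show ?thesis by (rule spectral_radius_jnf_norm_bound_less_1_upper_triangular[OF A])
qed

text \<open>Choosing \<open>r\<close> between the spectral radius and \<open>1\<close>, the rescaled matrix \<open>B / r\<close> still has
  bounded powers.\<close>

lemma mat_power_decay:
  fixes B :: "complex mat"
  assumes B: "B \<in> carrier_mat n n" and ev: "\<And>\<mu>. eigenvalue B \<mu> \<Longrightarrow> cmod \<mu> < 1"
  shows "\<exists>r c. 0 < r \<and> r < 1 \<and> (\<forall>k. norm_bound (B ^\<^sub>m k) (c * r ^ k))"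
proof -
  obtain r where r: "0 < r" "r < 1" and evr: "\<And>\<mu>. eigenvalue B \<mu> \<Longrightarrow> cmod \<mu> < r"
    using eigenvalues_uniformly_less_1[OF B ev] by blast
  define C where "C = complex_of_real (1 / r) \<cdot>\<^sub>m B"
  have C: "C \<in> carrier_mat n n" unfolding C_def using B by simp
  have BC: "B = complex_of_real r \<cdot>\<^sub>m C"
    unfolding C_def using B r(1) by (auto intro!: eq_matI)
  have "cmod \<nu> < 1" if "eigenvalue C \<nu>" for \<nu>
  proof -
    have "eigenvalue B (complex_of_real r * \<nu>)"
      using eigenvalue_smult_mat[OF C that] BC by simp
    then have "r * cmod \<nu> < r * 1" using evr r(1) by (fastforce simp: norm_mult)
    then show ?thesis using r(1) by simp
  qed
  then obtain c where c: "\<And>k. norm_bound (C ^\<^sub>m k) c"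
    using power_bounded_if_eigenvalues_less_1[OF C] by blast
  have "norm_bound (B ^\<^sub>m k) (c * r ^ k)" for k
  proof
    fix i j assume "i < dim_row (B ^\<^sub>m k)" "j < dim_col (B ^\<^sub>m k)"
    then have ij: "i < n" "j < n" using B by (auto split: if_splits)
    have "(B ^\<^sub>m k) $$ (i, j) = complex_of_real r ^ k * (C ^\<^sub>m k) $$ (i, j)"
      unfolding BC smult_pow_mat[OF C] using ij C by simp
    moreover have "cmod ((C ^\<^sub>m k) $$ (i, j)) \<le> c"
      using c[of k] ij C unfolding norm_bound_def by simp
    ultimately show "norm ((B ^\<^sub>m k) $$ (i, j)) \<le> c * r ^ k"
      using r(1) by (simp add: norm_mult norm_power mult.commute mult_left_mono)
  qed
  then show ?thesis using r by blast
qed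

definition norm1_vec :: "'a :: real_normed_field vec \<Rightarrow> real" where
  "norm1_vec v = (\<Sum>i<dim_vec v. norm (v $ i))"

lemma norm1_vec_nonneg: "0 \<le> norm1_vec v"
  unfolding norm1_vec_def by (intro sum_nonneg) auto

lemma norm1_vec_eq_0_iff:
  assumes "v \<in> carrier_vec n"
  shows "norm1_vec v = 0 \<longleftrightarrow> v = 0\<^sub>v n"
proof
  assume "norm1_vec v = 0"
  then have "\<forall>i\<in>{..<dim_vec v}. norm (v $ i) = 0"
    unfolding norm1_vec_def by (subst sum_nonneg_eq_0_iff[symmetric]) auto
  then show "v = 0\<^sub>v n" using assms by (intro eq_vecI) auto
qed (simp add: norm1_vec_def)

lemma norm1_vec_smult: "norm1_vec (a \<cdot>\<^sub>v v) = norm a * norm1_vec v"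
  unfolding norm1_vec_def by (simp add: sum_distrib_left norm_mult)

lemma norm1_vec_add:
  assumes "dim_vec u = dim_vec v"
  shows "norm1_vec (u + v) \<le> norm1_vec u + norm1_vec v"
proof -
  have "norm1_vec (u + v) = (\<Sum>i<dim_vec v. norm (u $ i + v $ i))"
    by (simp add: norm1_vec_def)
  also have "\<dots> \<le> (\<Sum>i<dim_vec v. norm (u $ i) + norm (v $ i))"
    by (intro sum_mono norm_triangle_ineq)
  also have "\<dots> = norm1_vec u + norm1_vec v"
    using assms by (simp add: norm1_vec_def sum.distrib)
  finally show ?thesis .
qed

lemma norm1_vec_mult_mat_vec_le:
  assumes A: "A \<in> carrier_mat m n" and D: "\<And>i j. i < m \<Longrightarrow> j < n \<Longrightarrow> norm (A $$ (i, j)) \<le> D"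
    and v: "v \<in> carrier_vec n"
  shows "norm1_vec (A *\<^sub>v v) \<le> real m * D * norm1_vec v"
proof -
  have row: "norm ((A *\<^sub>v v) $ i) \<le> D * norm1_vec v" if i: "i < m" for i
  proof -
    have "norm ((A *\<^sub>v v) $ i) = norm (\<Sum>j<n. A $$ (i, j) * v $ j)"
      using A v i by (auto simp: scalar_prod_def lessThan_atLeast0)
    also have "\<dots> \<le> (\<Sum>j<n. norm (A $$ (i, j)) * norm (v $ j))"
      by (auto intro: order.trans[OF norm_sum] simp: norm_mult)
    also have "\<dots> \<le> (\<Sum>j<n. D * norm (v $ j))"
      using D i by (intro sum_mono mult_right_mono) auto
    finally show ?thesis using v unfolding norm1_vec_def by (simp add: sum_distrib_left)
  qed
  have "norm1_vec (A *\<^sub>v v) = (\<Sum>i<m. norm ((A *\<^sub>v v) $ i))"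
    using A by (simp add: norm1_vec_def)
  also have "\<dots> \<le> (\<Sum>i<m. D * norm1_vec v)"
    by (rule sum_mono) (use row in simp)
  finally show ?thesis by simp
qed

definition power_sum_norm :: "'a :: real_normed_field mat \<Rightarrow> nat \<Rightarrow> 'a vec \<Rightarrow> real" where
  "power_sum_norm B L v = (\<Sum>k<L. norm1_vec (B ^\<^sub>m k *\<^sub>v v))"

lemma norm1_vec_le_power_sum_norm:
  assumes "B \<in> carrier_mat n n" "v \<in> carrier_vec n" "0 < L"
  shows "norm1_vec v \<le> power_sum_norm B L v"
proof -
  have "norm1_vec v = norm1_vec (B ^\<^sub>m 0 *\<^sub>v v)" using assms by simp
  also have "\<dots> \<le> power_sum_norm B L v"
    unfolding power_sum_norm_def using assms(3) by (intro member_le_sum) (auto simp: norm1_vec_nonneg)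
  finally show ?thesis .
qed

lemma power_sum_norm_le:
  assumes B: "B \<in> carrier_mat n n" and v: "v \<in> carrier_vec n"
    and D: "\<And>k i j. i < n \<Longrightarrow> j < n \<Longrightarrow> norm ((B ^\<^sub>m k) $$ (i, j)) \<le> D"
  shows "power_sum_norm B L v \<le> real L * (real n * D) * norm1_vec v"
proof -
  have "power_sum_norm B L v \<le> (\<Sum>k<L. real n * D * norm1_vec v)"
    unfolding power_sum_norm_def
    by (intro sum_mono norm1_vec_mult_mat_vec_le[OF pow_carrier_mat[OF B] D v])
  then show ?thesis by simp
qed

lemma power_sum_norm_mult_mat_vec:
  assumes B: "B \<in> carrier_mat n n" and v: "v \<in> carrier_vec n"
  shows "power_sum_norm B L (B *\<^sub>v v) = power_sum_norm B L v - norm1_vec v + norm1_vec (B ^\<^sub>m L *\<^sub>v v)"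
proof -
  have shift: "B ^\<^sub>m k *\<^sub>v (B *\<^sub>v v) = B ^\<^sub>m Suc k *\<^sub>v v" for k
    using B v by (simp add: assoc_mult_mat_vec[symmetric, of _ n n _ n])
  have "(\<Sum>k<Suc L. norm1_vec (B ^\<^sub>m k *\<^sub>v v))
      = norm1_vec (B ^\<^sub>m 0 *\<^sub>v v) + (\<Sum>k<L. norm1_vec (B ^\<^sub>m Suc k *\<^sub>v v))"
    by (rule sum.lessThan_Suc_shift)
  then show ?thesis
    unfolding power_sum_norm_def shift using B v by simp
qed

lemma is_vec_norm_power_sum_norm:
  fixes B :: "complex mat"
  assumes B: "B \<in> carrier_mat n n" and L: "0 < L"
  shows "is_vec_norm n (power_sum_norm B L)"
  unfolding is_vec_norm_def
proof (intro conjI ballI allI)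
  fix v :: "complex vec" assume v: "v \<in> carrier_vec n"
  show "0 \<le> power_sum_norm B L v"
    unfolding power_sum_norm_def by (intro sum_nonneg) (auto simp: norm1_vec_nonneg)
  show "power_sum_norm B L v = 0 \<longleftrightarrow> v = 0\<^sub>v n"
  proof
    assume "power_sum_norm B L v = 0"
    then have "norm1_vec v = 0"
      using norm1_vec_le_power_sum_norm[OF B v L] norm1_vec_nonneg[of v] by simp
    then show "v = 0\<^sub>v n" using norm1_vec_eq_0_iff[OF v] by simp
  next
    assume "v = 0\<^sub>v n"
    moreover have "B ^\<^sub>m k *\<^sub>v 0\<^sub>v n = 0\<^sub>v n" for k
      using pow_carrier_mat[OF B, of k] by (intro eq_vecI) (auto simp: scalar_prod_def intro!: sum.neutral)
    ultimately show "power_sum_norm B L v = 0"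
      unfolding power_sum_norm_def by (simp add: norm1_vec_def)
  qed
next
  fix a :: complex and v :: "complex vec" assume v: "v \<in> carrier_vec n"
  have "B ^\<^sub>m k *\<^sub>v (a \<cdot>\<^sub>v v) = a \<cdot>\<^sub>v (B ^\<^sub>m k *\<^sub>v v)" for k
    by (rule mult_mat_vec[OF pow_carrier_mat[OF B] v])
  then show "power_sum_norm B L (a \<cdot>\<^sub>v v) = cmod a * power_sum_norm B L v"
    unfolding power_sum_norm_def by (simp add: norm1_vec_smult sum_distrib_left)
next
  fix u v :: "complex vec" assume u: "u \<in> carrier_vec n" and v: "v \<in> carrier_vec n"
  have "power_sum_norm B L (u + v) \<le> (\<Sum>k<L. norm1_vec (B ^\<^sub>m k *\<^sub>v u) + norm1_vec (B ^\<^sub>m k *\<^sub>v v))"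
    unfolding power_sum_norm_def using u v
    by (intro sum_mono) (simp add: mult_add_distrib_mat_vec[OF pow_carrier_mat[OF B] u v] norm1_vec_add)
  then show "power_sum_norm B L (u + v) \<le> power_sum_norm B L u + power_sum_norm B L v"
    unfolding power_sum_norm_def by (simp add: sum.distrib)
qed

text \<open>Once \<open>B\<^sup>L\<close> has become small, the last summand gained when passing from \<open>v\<close> to \<open>B v\<close> costs
  at most half of the first summand \<open>\<parallel>v\<parallel>\<^sub>1\<close> lost, and \<open>\<parallel>v\<parallel>\<^sub>1\<close> is comparable to the whole sum.\<close>

lemma power_sum_norm_contraction:
  fixes B :: "'a :: real_normed_field mat"
  assumes B: "B \<in> carrier_mat n n" and r: "0 < r" "r < 1"
    and decay: "\<And>k. norm_bound (B ^\<^sub>m k) (c * r ^ k)"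
  shows "\<exists>L q. 0 < L \<and> 0 \<le> q \<and> q < 1 \<and>
           (\<forall>v \<in> carrier_vec n. power_sum_norm B L (B *\<^sub>v v) \<le> q * power_sum_norm B L v)"
proof -
  have bound: "norm ((B ^\<^sub>m k) $$ (i, j)) \<le> c * r ^ k" if "i < n" "j < n" for k i j
    using decay[of k] that B unfolding norm_bound_def by simp
  have "c * r ^ k \<le> \<bar>c\<bar>" for k
    using r mult_mono[of c "\<bar>c\<bar>" "r ^ k" 1] by (simp add: power_le_one)
  then have bound_abs: "norm ((B ^\<^sub>m k) $$ (i, j)) \<le> \<bar>c\<bar>" if "i < n" "j < n" for k i j
    using bound[OF that] order.trans by blast
  define E where "E = real n * \<bar>c\<bar>"
  have E: "0 \<le> E" unfolding E_def by simp
  obtain K where K: "r ^ K < 1 / (2 * (E + 1))"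
    using real_arch_pow_inv[of "1 / (2 * (E + 1))" r] r(2) E by auto
  define L where "L = Suc K"
  have "E * r ^ L \<le> (E + 1) * r ^ K"
    unfolding L_def using r E by (intro mult_mono) (auto simp: power_decreasing)
  also have "\<dots> \<le> 1 / 2" using K E by (simp add: field_simps)
  finally have EL: "E * r ^ L \<le> 1 / 2" .
  define M where "M = real L * E + 1"
  have M: "1 \<le> M" unfolding M_def using E by simp
  have "power_sum_norm B L (B *\<^sub>v v) \<le> (1 - 1 / (2 * M)) * power_sum_norm B L v"
    if v: "v \<in> carrier_vec n" for v
  proof -
    have "norm1_vec (B ^\<^sub>m L *\<^sub>v v) \<le> real n * (c * r ^ L) * norm1_vec v"
      by (rule norm1_vec_mult_mat_vec_le[OF pow_carrier_mat[OF B] bound v])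
    also have "\<dots> \<le> E * r ^ L * norm1_vec v"
      unfolding E_def using r(1) norm1_vec_nonneg[of v]
      by (intro mult_right_mono) (auto simp: mult.assoc intro!: mult_left_mono mult_right_mono)
    also have "\<dots> \<le> norm1_vec v / 2"
      using mult_right_mono[OF EL norm1_vec_nonneg[of v]] by simp
    finally have "power_sum_norm B L (B *\<^sub>v v) \<le> power_sum_norm B L v - norm1_vec v / 2"
      using power_sum_norm_mult_mat_vec[OF B v, of L] by simp
    moreover have "power_sum_norm B L v \<le> M * norm1_vec v"
      using power_sum_norm_le[OF B v bound_abs, of L] norm1_vec_nonneg[of v]
      unfolding M_def E_def by (simp add: distrib_right)
    then have "power_sum_norm B L v / (2 * M) \<le> norm1_vec v / 2"
      using M by (simp add: field_simps)
    moreover have "(1 - 1 / (2 * M)) * power_sum_norm B L v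
        = power_sum_norm B L v - power_sum_norm B L v / (2 * M)"
      by (simp add: left_diff_distrib)
    ultimately show ?thesis by linarith
  qed
  moreover have "0 \<le> 1 - 1 / (2 * M)" "1 - 1 / (2 * M) < 1" using M by auto
  ultimately show ?thesis unfolding L_def by blast
qed

lemma induced_mat_norm_le:
  assumes "0 \<le> q" and "\<And>v. v \<in> carrier_vec n \<Longrightarrow> Nrm (B *\<^sub>v v) \<le> q * Nrm v"
  shows "induced_mat_norm n Nrm B \<le> q"
  unfolding induced_mat_norm_def using assms by (intro cSup_least) fastforce+

theorem lemma7:
  fixes \<tau> :: real and n :: nat and N B :: "complex mat"
  assumes "\<tau> > 0"
    and "N \<in> carrier_mat n n" and "B \<in> carrier_mat n n"
    and "N * B = B * N"
    and "\<exists>k. N ^\<^sub>m k = 0\<^sub>m n n"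
    and "{z. det (z \<cdot>\<^sub>m N - 1\<^sub>m n - exp (- z * complex_of_real \<tau>) \<cdot>\<^sub>m B) = 0}
           \<subseteq> {z. Re z < 0}"
  shows "(\<forall>\<mu>. eigenvalue B \<mu> \<longrightarrow> cmod \<mu> < 1) \<and>
         (\<exists>Nrm. is_vec_norm n Nrm \<and> induced_mat_norm n Nrm B < 1)"
proof -
  obtain k where nil: "N ^\<^sub>m k = 0\<^sub>m n n" using assms(5) by blast
  have ev: "\<And>\<mu>. eigenvalue B \<mu> \<Longrightarrow> cmod \<mu> < 1"
    by (rule eigenvalue_cmod_less_1[OF assms(1-4) nil assms(6)])
  obtain r c where "0 < r" "r < 1" "\<And>k. norm_bound (B ^\<^sub>m k) (c * r ^ k)"
    using mat_power_decay[OF assms(3) ev] by blast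
  then obtain L q where L: "0 < L" and q: "0 \<le> q" "q < 1"
    and contr: "\<forall>v \<in> carrier_vec n. power_sum_norm B L (B *\<^sub>v v) \<le> q * power_sum_norm B L v"
    using power_sum_norm_contraction[OF assms(3)] by metis
  have "induced_mat_norm n (power_sum_norm B L) B < 1"
    using induced_mat_norm_le[of q n "power_sum_norm B L" B] q contr by fastforce
  then show ?thesis
    using ev is_vec_norm_power_sum_norm[OF assms(3) L] by blast
qed

end
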